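(* Let $A\in\mathbb{N}^{n\times m}$ have distinct columns. For $k\in[m]$ define $$C_{\mathrm{POLY\text{-}AGE}}(A,k)=\{c\in\mathbb{R}^m:\ \mathrm{Poly}(A,c)(x)\ge 0\ \forall x\in\mathbb{R}^n,\ c_i\ge 0\ \forall i\ne k,\ c_i=0\text{ for all } i\ne k\text{ with } a_i\notin(2\mathbb{N})^n\}.$$ Then $\sum_{k=1}^m C_{\mathrm{POLY\text{-}AGE}}(A,k)=C_{\mathrm{POLY\text{-}SAGE}}(A)$.
   Context: For $A\in\mathbb{N}^{n\times m}$ with distinct columns $a_i$ and $c\in\mathbb{R}^m$, $\mathrm{Poly}(A,c)$ is the polynomial $x\mapsto\sum_{i=1}^m c_i x^{a_i}$ on $\mathbb{R}^n$; a column $a_i$ is even if $a_i\in(2\mathbb{N})^n$. $\mathrm{Sig}(A,c)$ is $x\mapsto\sum_i c_i\exp(a_i^\top x)$; $C_{\mathrm{NNS}}(A)=\{c:\mathrm{Sig}(A,c)\ge 0\text{ on }\mathbb{R}^n\}$; $C_{\mathrm{AGE}}(A,k)=\{c\in C_{\mathrm{NNS}}(A): c_i\ge 0\ \forall i\ne k\}$; $C_{\mathrm{SAGE}}(A)=\sum_k C_{\mathrm{AGE}}(A,k)$. The signomial representative of $c$ is $\hat c\in\mathbb{R}^m$ with $\hat c_i=c_i$ if $a_i$ is even and $\hat c_i=-|c_i|$ otherwise; $C_{\mathrm{POLY\text{-}SAGE}}(A)=\{c\in\mathbb{R}^m:\hat c\in C_{\mathrm{SAGE}}(A)\}$. *)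

theory Defs
  imports Complex_Main
begin

text \<open>Exponent matrix A in N^(n x m) is modelled as A :: 'm => 'n => nat, where
  the finite type 'm indexes the columns (monomials) and the finite type 'n the
  variables; the column a_i is A i.\<close>

definition poly_fun :: "('m::finite \<Rightarrow> 'n::finite \<Rightarrow> nat) \<Rightarrow> ('m \<Rightarrow> real) \<Rightarrow> ('n \<Rightarrow> real) \<Rightarrow> real" where
  "poly_fun A c x = (\<Sum>i\<in>UNIV. c i * (\<Prod>j\<in>UNIV. x j ^ A i j))"

definition sig_fun :: "('m::finite \<Rightarrow> 'n::finite \<Rightarrow> nat) \<Rightarrow> ('m \<Rightarrow> real) \<Rightarrow> ('n \<Rightarrow> real) \<Rightarrow> real" where
  "sig_fun A c x = (\<Sum>i\<in>UNIV. c i * exp (\<Sum>j\<in>UNIV. real (A i j) * x j))"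

definition even_col :: "('m::finite \<Rightarrow> 'n::finite \<Rightarrow> nat) \<Rightarrow> 'm \<Rightarrow> bool" where
  "even_col A i \<longleftrightarrow> (\<forall>j. even (A i j))"

definition C_NNS :: "('m::finite \<Rightarrow> 'n::finite \<Rightarrow> nat) \<Rightarrow> ('m \<Rightarrow> real) set" where
  "C_NNS A = {c. \<forall>x. sig_fun A c x \<ge> 0}"

definition C_AGE :: "('m::finite \<Rightarrow> 'n::finite \<Rightarrow> nat) \<Rightarrow> 'm \<Rightarrow> ('m \<Rightarrow> real) set" where
  "C_AGE A k = {c \<in> C_NNS A. \<forall>i. i \<noteq> k \<longrightarrow> c i \<ge> 0}"

definition msum :: "('m::finite \<Rightarrow> ('v \<Rightarrow> real) set) \<Rightarrow> ('v \<Rightarrow> real) set" where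
  "msum C = {c. \<exists>f. (\<forall>k. f k \<in> C k) \<and> c = (\<lambda>i. \<Sum>k\<in>UNIV. f k i)}"

definition C_SAGE :: "('m::finite \<Rightarrow> 'n::finite \<Rightarrow> nat) \<Rightarrow> ('m \<Rightarrow> real) set" where
  "C_SAGE A = msum (C_AGE A)"

definition sig_rep :: "('m::finite \<Rightarrow> 'n::finite \<Rightarrow> nat) \<Rightarrow> ('m \<Rightarrow> real) \<Rightarrow> ('m \<Rightarrow> real)" where
  "sig_rep A c = (\<lambda>i. if even_col A i then c i else - \<bar>c i\<bar>)"

definition C_POLY_SAGE :: "('m::finite \<Rightarrow> 'n::finite \<Rightarrow> nat) \<Rightarrow> ('m \<Rightarrow> real) set" where
  "C_POLY_SAGE A = {c. sig_rep A c \<in> C_SAGE A}"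

definition C_POLY_AGE :: "('m::finite \<Rightarrow> 'n::finite \<Rightarrow> nat) \<Rightarrow> 'm \<Rightarrow> ('m \<Rightarrow> real) set" where
  "C_POLY_AGE A k = {c. (\<forall>x. poly_fun A c x \<ge> 0) \<and> (\<forall>i. i \<noteq> k \<longrightarrow> c i \<ge> 0)
                        \<and> (\<forall>i. i \<noteq> k \<and> \<not> even_col A i \<longrightarrow> c i = 0)}"

end

theory Submission
  imports Defs
begin

text \<open>
  For a coefficient vector whose only odd-exponent term is the k-th one, substituting
  \<open>x = s \<cdot> exp y\<close> with a sign \<open>s\<close> flipped in one coordinate where the k-th column is odd turns
  the polynomial into the signomial of its representative; conversely a nonnegative signomial
  gives a nonnegative polynomial on the positive orthant, hence (by continuity) at \<open>\<bar>x\<bar>\<close>, and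
  replacing \<open>\<bar>x\<bar>\<close> by \<open>x\<close> can only increase the polynomial. So a polynomial AGE vector is exactly
  a vector whose representative is AGE and which vanishes on the other odd columns. It remains to
  rearrange a SAGE decomposition of the representative so that every odd column lives in a
  single summand: the column sum there is \<open>\<le> 0\<close>, so the negative diagonal entry of the i-th summand can absorb
  the positive entries of the others by adding nonnegative multiples of it to them.
\<close>

lemma sig_fun_add_scaled:
  "sig_fun A (\<lambda>j. a j + t * b j) y = sig_fun A a y + t * sig_fun A b y"
  unfolding sig_fun_def by (simp add: algebra_simps sum.distrib sum_distrib_left)

lemma sig_fun_scaled: "sig_fun A (\<lambda>j. t * b j) y = t * sig_fun A b y"
  unfolding sig_fun_def by (simp add: algebra_simps sum_distrib_left)

lemma poly_fun_flip_exp: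
  fixes A :: "'m::finite \<Rightarrow> 'n::finite \<Rightarrow> nat"
  shows "poly_fun A c (\<lambda>j. (if j = j0 then s else 1) * exp (y j))
       = sig_fun A (\<lambda>i. c i * s ^ A i j0) y"
proof -
  have "(\<Prod>j\<in>UNIV. ((if j = j0 then s else 1) * exp (y j)) ^ A i j)
      = s ^ A i j0 * exp (\<Sum>j\<in>UNIV. real (A i j) * y j)" for i
  proof -
    have "(\<Prod>j\<in>UNIV. ((if j = j0 then s else 1) * exp (y j)) ^ A i j)
        = (\<Prod>j\<in>UNIV. (if j = j0 then s ^ A i j else 1) * exp (y j) ^ A i j)"
      by (intro prod.cong) (auto simp: power_mult_distrib)
    also have "\<dots> = s ^ A i j0 * (\<Prod>j\<in>UNIV. exp (y j) ^ A i j)"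
      by (subst prod.distrib) (simp only: prod.delta finite UNIV_I if_True)
    finally show ?thesis by (simp add: exp_sum exp_of_nat_mult)
  qed
  then show ?thesis
    unfolding poly_fun_def sig_fun_def by (simp add: mult.assoc)
qed

lemma poly_fun_exp: "poly_fun A c (\<lambda>j. exp (y j)) = sig_fun A c y"
  using poly_fun_flip_exp[of A c undefined 1 y] by simp

lemma poly_fun_abs_nonneg:
  assumes "c \<in> C_NNS A"
  shows "0 \<le> poly_fun A c (\<lambda>j. \<bar>x j\<bar>)"
proof -
  let ?P = "\<lambda>t. poly_fun A c (\<lambda>j. \<bar>x j\<bar> + t)"
  have "(?P \<longlongrightarrow> ?P 0) (at_right 0)"
    unfolding poly_fun_def by (intro tendsto_intros)
  moreover have "eventually (\<lambda>t. 0 \<le> ?P t) (at_right 0)"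
    using eventually_at_right_less[of "0::real"]
  proof (rule eventually_mono)
    fix t :: real assume "0 < t"
    then have "(\<lambda>j. \<bar>x j\<bar> + t) = (\<lambda>j. exp (ln (\<bar>x j\<bar> + t)))"
      by (simp add: add_nonneg_pos)
    then show "0 \<le> ?P t"
      using assms by (simp add: poly_fun_exp C_NNS_def)
  qed
  ultimately have "0 \<le> ?P 0" by (intro tendsto_lowerbound) auto
  then show ?thesis by simp
qed

lemma poly_fun_sig_rep_abs_le:
  "poly_fun A (sig_rep A c) (\<lambda>j. \<bar>x j\<bar>) \<le> poly_fun A c x"
  unfolding poly_fun_def
proof (rule sum_mono)
  fix i
  let ?P = "\<Prod>j\<in>UNIV. x j ^ A i j"
  show "sig_rep A c i * (\<Prod>j\<in>UNIV. \<bar>x j\<bar> ^ A i j) \<le> c i * ?P"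
  proof (cases "even_col A i")
    case True
    then have "(\<Prod>j\<in>UNIV. \<bar>x j\<bar> ^ A i j) = ?P"
      by (intro prod.cong refl) (simp add: even_col_def power_even_abs)
    then show ?thesis using True by (simp add: sig_rep_def)
  next
    case False
    have "\<bar>?P\<bar> = (\<Prod>j\<in>UNIV. \<bar>x j\<bar> ^ A i j)"
      by (simp add: abs_prod power_abs)
    moreover have "- \<bar>c i\<bar> * \<bar>?P\<bar> \<le> c i * ?P"
      using abs_ge_minus_self[of "c i * ?P"] by (simp add: abs_mult)
    ultimately show ?thesis
      using False by (simp add: sig_rep_def)
  qed
qed

lemma sig_rep_in_C_NNS:
  fixes A :: "'m::finite \<Rightarrow> 'n::finite \<Rightarrow> nat"
  assumes nonneg: "\<forall>x. 0 \<le> poly_fun A c x"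
    and odd_zero: "\<forall>i. i \<noteq> k \<and> \<not> even_col A i \<longrightarrow> c i = 0"
  shows "sig_rep A c \<in> C_NNS A"
proof -
  obtain j0 where j0: "\<not> even_col A k \<longrightarrow> odd (A k j0)"
    unfolding even_col_def by auto
  define s :: real where "s = (if \<not> even_col A k \<and> c k > 0 then -1 else 1)"
  have "c i * s ^ A i j0 = sig_rep A c i" for i
  proof (cases "even_col A i")
    case True
    then have "s ^ A i j0 = 1"
      by (auto simp: s_def even_col_def)
    then show ?thesis using True by (simp add: sig_rep_def)
  next
    case False
    show ?thesis
    proof (cases "i = k")
      case True
      then have "s ^ A i j0 = s" using False j0 by (simp add: s_def)
      then show ?thesis using True False by (simp add: s_def sig_rep_def)
    next
      case False
      then show ?thesis using \<open>\<not> even_col A i\<close> odd_zero by (simp add: sig_rep_def)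
    qed
  qed
  then have "sig_fun A (sig_rep A c) y = poly_fun A c (\<lambda>j. (if j = j0 then s else 1) * exp (y j))"
    for y by (simp add: poly_fun_flip_exp)
  then show ?thesis
    using nonneg by (simp add: C_NNS_def)
qed

lemma C_POLY_AGE_iff:
  fixes A :: "'m::finite \<Rightarrow> 'n::finite \<Rightarrow> nat"
  shows "c \<in> C_POLY_AGE A k \<longleftrightarrow>
    sig_rep A c \<in> C_AGE A k \<and> (\<forall>i. i \<noteq> k \<and> \<not> even_col A i \<longrightarrow> c i = 0)"
proof
  assume c: "c \<in> C_POLY_AGE A k"
  then have "sig_rep A c \<in> C_NNS A"
    by (intro sig_rep_in_C_NNS[where k = k]) (auto simp: C_POLY_AGE_def)
  with c show "sig_rep A c \<in> C_AGE A k \<and> (\<forall>i. i \<noteq> k \<and> \<not> even_col A i \<longrightarrow> c i = 0)"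
    by (auto simp: C_POLY_AGE_def C_AGE_def sig_rep_def)
next
  assume c: "sig_rep A c \<in> C_AGE A k \<and> (\<forall>i. i \<noteq> k \<and> \<not> even_col A i \<longrightarrow> c i = 0)"
  have "0 \<le> poly_fun A c x" for x
    using poly_fun_abs_nonneg[of "sig_rep A c" A x] poly_fun_sig_rep_abs_le[of A c x] c
    by (simp add: C_AGE_def)
  moreover have "0 \<le> c i" if "i \<noteq> k" for i
    using c that by (cases "even_col A i") (auto simp: C_AGE_def sig_rep_def)
  ultimately show "c \<in> C_POLY_AGE A k"
    using c by (simp add: C_POLY_AGE_def)
qed

definition odd_diagonal :: "('m::finite \<Rightarrow> 'n::finite \<Rightarrow> nat) \<Rightarrow> ('m \<Rightarrow> 'm \<Rightarrow> real) \<Rightarrow> bool" where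
  "odd_diagonal A g \<longleftrightarrow> (\<forall>i k. \<not> even_col A i \<and> k \<noteq> i \<longrightarrow> g k i = 0)"

lemma sum_odd_diagonal:
  assumes "odd_diagonal A g" and "\<not> even_col A i"
  shows "(\<Sum>k\<in>UNIV. g k i) = g i i"
proof -
  have "(\<Sum>k\<in>UNIV. g k i) = g i i + (\<Sum>k\<in>UNIV - {i}. g k i)"
    by (simp add: sum.remove)
  also have "(\<Sum>k\<in>UNIV - {i}. g k i) = 0"
    using assms by (intro sum.neutral) (auto simp: odd_diagonal_def)
  finally show ?thesis by simp
qed

lemma sig_rep_sum_odd_diagonal:
  assumes "odd_diagonal A g"
  shows "sig_rep A (\<lambda>i. \<Sum>k\<in>UNIV. g k i) = (\<lambda>i. \<Sum>k\<in>UNIV. sig_rep A (g k) i)"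
proof
  fix i
  show "sig_rep A (\<lambda>i. \<Sum>k\<in>UNIV. g k i) i = (\<Sum>k\<in>UNIV. sig_rep A (g k) i)"
  proof (cases "even_col A i")
    case True
    then show ?thesis by (simp add: sig_rep_def)
  next
    case False
    have "odd_diagonal A (\<lambda>k. sig_rep A (g k))"
      using assms by (simp add: odd_diagonal_def sig_rep_def)
    from sum_odd_diagonal[OF this False] sum_odd_diagonal[OF assms False]
    show ?thesis by (simp add: sig_rep_def)
  qed
qed

lemma column_absorption_weights:
  fixes v :: "'m::finite \<Rightarrow> real"
  assumes nonneg: "\<forall>k. k \<noteq> i \<longrightarrow> 0 \<le> v k" and sum_nonpos: "(\<Sum>k\<in>UNIV. v k) \<le> 0"
  obtains s where "\<forall>k. 0 \<le> s k" and "s i = 0" and "(\<Sum>k\<in>UNIV. s k) \<le> 1"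
    and "\<forall>k. k \<noteq> i \<longrightarrow> v k + s k * v i = 0"
proof -
  define p where "p = (\<Sum>k\<in>UNIV - {i}. v k)"
  have p_nonneg: "0 \<le> p" unfolding p_def using nonneg by (intro sum_nonneg) auto
  have vi: "v i + p \<le> 0" using sum_nonpos by (simp add: p_def sum.remove)
  show thesis
  proof (cases "v i = 0")
    case True
    then have "p = 0" using vi p_nonneg by simp
    then have "\<forall>k. k \<noteq> i \<longrightarrow> v k = 0"
      using nonneg sum_nonneg_eq_0_iff[of "UNIV - {i}" v] by (simp add: p_def)
    then show thesis using True by (intro that[of "\<lambda>_. 0"]) auto
  next
    case False
    then have q: "0 < - v i" using vi p_nonneg by simp
    define s where "s k = (if k = i then 0 else v k / - v i)" for k
    have "(\<Sum>k\<in>UNIV. s k) = s i + (\<Sum>k\<in>UNIV - {i}. s k)"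
      by (simp add: sum.remove)
    also have "\<dots> = (\<Sum>k\<in>UNIV - {i}. v k / - v i)"
      by (simp add: s_def)
    also have "\<dots> = p / - v i" by (simp add: p_def sum_divide_distrib sum_negf)
    also have "\<dots> \<le> 1" using q vi by (subst pos_divide_le_eq) auto
    finally have "(\<Sum>k\<in>UNIV. s k) \<le> 1" .
    moreover have "\<forall>k. 0 \<le> s k"
      using nonneg q by (auto simp: s_def intro: divide_nonneg_neg)
    ultimately show thesis using q by (intro that[of s]) (auto simp: s_def)
  qed
qed

lemma C_AGE_scaled:
  assumes "b \<in> C_AGE A k" and "0 \<le> t"
  shows "(\<lambda>j. t * b j) \<in> C_AGE A k"
  using assms by (simp add: C_AGE_def C_NNS_def sig_fun_scaled)

lemma C_AGE_add_scaled:
  assumes "a \<in> C_AGE A k" and "b \<in> C_AGE A i" and "k \<noteq> i" and "0 \<le> t"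
    and "0 \<le> a i + t * b i"
  shows "(\<lambda>j. a j + t * b j) \<in> C_AGE A k"
proof -
  have "0 \<le> a j + t * b j" if "j \<noteq> k" for j
    using assms that by (cases "j = i") (auto simp: C_AGE_def)
  then show ?thesis
    using assms by (simp add: C_AGE_def C_NNS_def sig_fun_add_scaled)
qed

lemma C_AGE_family_clear_column:
  assumes g: "\<forall>k. g k \<in> C_AGE A k" and col: "(\<Sum>k\<in>UNIV. g k i) \<le> 0"
  obtains h where "\<forall>k. h k \<in> C_AGE A k" and "\<forall>j. (\<Sum>k\<in>UNIV. h k j) = (\<Sum>k\<in>UNIV. g k j)"
    and "\<forall>k. k \<noteq> i \<longrightarrow> h k i = 0" and "\<forall>j k. g i j = 0 \<longrightarrow> h k j = g k j"
proof -
  have "\<forall>k. k \<noteq> i \<longrightarrow> 0 \<le> g k i" using g by (simp add: C_AGE_def)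
  then obtain s where s_nonneg: "\<forall>k. 0 \<le> s k" and s_i: "s i = 0"
    and s_sum: "(\<Sum>k\<in>UNIV. s k) \<le> 1" and absorbed: "\<forall>k. k \<noteq> i \<longrightarrow> g k i + s k * g i i = 0"
    using column_absorption_weights[of i "\<lambda>k. g k i"] col by blast
  define \<sigma> where "\<sigma> = (\<Sum>k\<in>UNIV. s k)"
  define h where "h k j = g k j + s k * g i j - (if k = i then \<sigma> * g i j else 0)" for k j
  have "h k \<in> C_AGE A k" for k
  proof (cases "k = i")
    case True
    then have "h k = (\<lambda>j. (1 - \<sigma>) * g i j)"
      by (auto simp: h_def s_i algebra_simps)
    then show ?thesis
      using True g s_sum C_AGE_scaled[of "g i" A i "1 - \<sigma>"] by (simp add: \<sigma>_def)
  next
    case False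
    then have "h k = (\<lambda>j. g k j + s k * g i j)" by (auto simp: h_def)
    then show ?thesis
      using False g s_nonneg absorbed C_AGE_add_scaled[of "g k" A k "g i" i "s k"] by simp
  qed
  moreover have "(\<Sum>k\<in>UNIV. h k j) = (\<Sum>k\<in>UNIV. g k j)" for j
    by (simp add: h_def sum.distrib sum_subtractf sum_distrib_right[symmetric] \<sigma>_def[symmetric])
  ultimately show thesis
    using absorbed by (intro that[of h]) (auto simp: h_def)
qed

lemma C_AGE_family_clear_columns:
  assumes f: "\<forall>k. f k \<in> C_AGE A k" and cols: "\<forall>i\<in>S. (\<Sum>k\<in>UNIV. f k i) \<le> 0"
  shows "\<exists>g. (\<forall>k. g k \<in> C_AGE A k) \<and> (\<forall>j. (\<Sum>k\<in>UNIV. g k j) = (\<Sum>k\<in>UNIV. f k j))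
     \<and> (\<forall>i\<in>S. \<forall>k. k \<noteq> i \<longrightarrow> g k i = 0)"
  using finite cols
proof (induction S rule: finite_induct)
  case empty
  then show ?case using f by auto
next
  case (insert i S)
  then obtain g where g: "\<forall>k. g k \<in> C_AGE A k"
    and g_sum: "\<forall>j. (\<Sum>k\<in>UNIV. g k j) = (\<Sum>k\<in>UNIV. f k j)"
    and g_cleared: "\<forall>i\<in>S. \<forall>k. k \<noteq> i \<longrightarrow> g k i = 0" by auto
  have "(\<Sum>k\<in>UNIV. g k i) \<le> 0" using g_sum insert.prems by simp
  then obtain h where "\<forall>k. h k \<in> C_AGE A k" and "\<forall>j. (\<Sum>k\<in>UNIV. h k j) = (\<Sum>k\<in>UNIV. g k j)"
    and "\<forall>k. k \<noteq> i \<longrightarrow> h k i = 0" and "\<forall>j k. g i j = 0 \<longrightarrow> h k j = g k j"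
    using C_AGE_family_clear_column[OF g] by blast
  \<comment> \<open>the columns in \<open>S\<close> stay cleared because \<open>g i\<close> vanishes on them, as \<open>i \<notin> S\<close>\<close>
  moreover have "\<forall>j\<in>S. g i j = 0" using g_cleared insert.hyps(2) by metis
  ultimately show ?case using g_sum g_cleared by (metis insert_iff)
qed

lemma msum_C_POLY_AGE_subset:
  fixes A :: "'m::finite \<Rightarrow> 'n::finite \<Rightarrow> nat"
  shows "msum (C_POLY_AGE A) \<subseteq> C_POLY_SAGE A"
proof
  fix c assume "c \<in> msum (C_POLY_AGE A)"
  then obtain g where g: "\<forall>k. g k \<in> C_POLY_AGE A k" and c: "c = (\<lambda>i. \<Sum>k\<in>UNIV. g k i)"
    unfolding msum_def by auto
  have "odd_diagonal A g" using g by (auto simp: odd_diagonal_def C_POLY_AGE_def)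
  then have "sig_rep A c = (\<lambda>i. \<Sum>k\<in>UNIV. sig_rep A (g k) i)"
    unfolding c by (rule sig_rep_sum_odd_diagonal)
  moreover have "\<forall>k. sig_rep A (g k) \<in> C_AGE A k" using g by (simp add: C_POLY_AGE_iff)
  ultimately show "c \<in> C_POLY_SAGE A"
    by (auto simp: C_POLY_SAGE_def C_SAGE_def msum_def)
qed

lemma C_POLY_SAGE_subset_msum:
  fixes A :: "'m::finite \<Rightarrow> 'n::finite \<Rightarrow> nat"
  shows "C_POLY_SAGE A \<subseteq> msum (C_POLY_AGE A)"
proof
  fix c assume "c \<in> C_POLY_SAGE A"
  then obtain f where f: "\<forall>k. f k \<in> C_AGE A k" and f_sum: "sig_rep A c = (\<lambda>i. \<Sum>k\<in>UNIV. f k i)"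
    unfolding C_POLY_SAGE_def C_SAGE_def msum_def by blast
  have f_sum': "(\<Sum>k\<in>UNIV. f k i) = sig_rep A c i" for i using f_sum by simp
  then have "\<forall>i\<in>{i. \<not> even_col A i}. (\<Sum>k\<in>UNIV. f k i) \<le> 0"
    by (simp add: sig_rep_def)
  then obtain g where g: "\<forall>k. g k \<in> C_AGE A k" and "\<forall>j. (\<Sum>k\<in>UNIV. g k j) = (\<Sum>k\<in>UNIV. f k j)"
    and cleared: "\<forall>i\<in>{i. \<not> even_col A i}. \<forall>k. k \<noteq> i \<longrightarrow> g k i = 0"
    using C_AGE_family_clear_columns[OF f] by blast
  then have g_sum: "(\<Sum>k\<in>UNIV. g k i) = sig_rep A c i" for i by (simp add: f_sum')
  have diag: "odd_diagonal A g" using cleared by (simp add: odd_diagonal_def)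
  define G where "G k i = (if even_col A i then g k i else if i = k then c i else 0)" for k i
  have "sig_rep A (G k) i = g k i" for k i
  proof (cases "even_col A i")
    case True
    then show ?thesis by (simp add: G_def sig_rep_def)
  next
    case False
    then have "g i i = - \<bar>c i\<bar>"
      using g_sum[of i] sum_odd_diagonal[OF diag False] by (simp add: sig_rep_def)
    then show ?thesis
      using False diag by (auto simp: G_def sig_rep_def odd_diagonal_def)
  qed
  then have "sig_rep A (G k) = g k" for k by blast
  then have "\<forall>k. G k \<in> C_POLY_AGE A k"
    using g by (simp add: C_POLY_AGE_iff G_def)
  moreover have "c i = (\<Sum>k\<in>UNIV. G k i)" for i
    using g_sum[of i] by (cases "even_col A i") (simp_all add: G_def sig_rep_def)
  ultimately show "c \<in> msum (C_POLY_AGE A)"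
    unfolding msum_def by blast
qed

theorem mainTheorem16:
  fixes A :: "'m::finite \<Rightarrow> 'n::finite \<Rightarrow> nat"
  assumes "inj A"
  shows "msum (C_POLY_AGE A) = C_POLY_SAGE A"
  using msum_C_POLY_AGE_subset C_POLY_SAGE_subset_msum by (rule equalityI)

end
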